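(* Let $a_1,\dots,a_n,b_1,\dots,b_m\in\Sigma_M$, and let $\tau$ be a shuffle (interleaving) of the action sequence $!?a_1\cdots !?a_n$ with the action sequence $!?b_1\cdots !?b_m$. Then for every peer $i\in\{1,\dots,N\}$ there is a shuffle $c_1\cdots c_{n+m}$ of the word $a_1\cdots a_n$ with the word $b_1\cdots b_m$ such that $\pi_i(\tau)=\pi_i(!?c_1\cdots !?c_{n+m})$.
   Context: A message set $M=(\Sigma_M,N,\mathrm{src},\mathrm{dst})$ consists of a finite set $\Sigma_M$ of messages, $N\ge1$ peers and maps $\mathrm{src},\mathrm{dst}:\Sigma_M\to\{1,\dots,N\}$ with $\mathrm{src}(a)\neq\mathrm{dst}(a)$. Actions are $!a$ (performed by peer $\mathrm{src}(a)$) and $?a$ (performed by peer $\mathrm{dst}(a)$); $!?a$ abbreviates $!a\cdot ?a$. For a finite sequence of actions $\tau$, $\pi_i(\tau)$ is the subsequence of actions of $\tau$ performed by peer $i$. *)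

theory Defs
  imports Main
begin

definition message_set :: "'m set \<Rightarrow> nat \<Rightarrow> ('m \<Rightarrow> nat) \<Rightarrow> ('m \<Rightarrow> nat) \<Rightarrow> bool" where
  "message_set SigmaM N src dst \<longleftrightarrow> finite SigmaM \<and> N \<ge> 1 \<and>
     (\<forall>a\<in>SigmaM. src a \<in> {1..N} \<and> dst a \<in> {1..N} \<and> src a \<noteq> dst a)"

datatype 'm action = Send 'm | Recv 'm

fun actor :: "('m \<Rightarrow> nat) \<Rightarrow> ('m \<Rightarrow> nat) \<Rightarrow> 'm action \<Rightarrow> nat" where
  "actor src dst (Send a) = src a"
| "actor src dst (Recv a) = dst a"

definition proj :: "('m \<Rightarrow> nat) \<Rightarrow> ('m \<Rightarrow> nat) \<Rightarrow> nat \<Rightarrow> 'm action list \<Rightarrow> 'm action list" where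
  "proj src dst i \<tau> = filter (\<lambda>x. actor src dst x = i) \<tau>"

text \<open>!?a1 ... !?an = !a1 ?a1 ... !an ?an\<close>
definition sendrecv :: "'m list \<Rightarrow> 'm action list" where
  "sendrecv w = concat (map (\<lambda>a. [Send a, Recv a]) w)"

end

theory Submission
  imports Defs
begin

text \<open>Since \<open>src a \<noteq> dst a\<close>, peer \<open>i\<close> sees at most one of the two actions of \<open>!?a\<close>. Hence
  \<open>\<pi>\<^sub>i(!?w)\<close> is the image of \<open>w\<close> under a morphism sending each letter to a word of length at
  most one. Projection commutes with shuffling, and a shuffle of the images of two words
  under such a morphism is always the image of a shuffle of the words themselves: one
  reads it off from left to right, consuming a letter whose image is empty for free.\<close>

lemma in_shuffles_short_prefixes_cases [consumes 3, case_names left right]: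
  assumes "t \<in> shuffles (u @ xs) (v @ ys)" "length u \<le> 1" "length v \<le> 1"
  obtains (left) t' where "t = u @ t'" "t' \<in> shuffles xs (v @ ys)"
    | (right) t' where "t = v @ t'" "t' \<in> shuffles (u @ xs) ys"
proof (cases "u = [] \<or> v = []")
  case True
  then show ?thesis using assms(1) that by auto
next
  case False
  with assms obtain x y where "u = [x]" "v = [y]"
    by (cases u; cases v) auto
  with assms(1) that show ?thesis
    by (cases t) (auto simp: Cons_in_shuffles_iff)
qed

lemma in_shuffles_concat_map_lift:
  assumes short: "\<And>x. length (e x) \<le> 1"
    and "t \<in> shuffles (concat (map e as)) (concat (map e bs))"
  shows "\<exists>cs \<in> shuffles as bs. t = concat (map e cs)"
  using assms(2)
proof (induction as bs arbitrary: t rule: shuffles.induct)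
  case (1 ys)
  then show ?case by auto
next
  case (2 xs)
  then show ?case by auto
next
  case (3 a as b bs)
  from "3.prems" have "t \<in> shuffles (e a @ concat (map e as)) (e b @ concat (map e bs))"
    by simp
  then show ?case
    using short[of a] short[of b]
  proof (cases rule: in_shuffles_short_prefixes_cases)
    case (left t')
    with "3.IH"(1) obtain cs where "cs \<in> shuffles as (b # bs)" "t' = concat (map e cs)"
      by auto
    with left show ?thesis
      by (intro bexI[of _ "a # cs"]) (auto intro: Cons_in_shuffles_leftI)
  next
    case (right t')
    with "3.IH"(2) obtain cs where "cs \<in> shuffles (a # as) bs" "t' = concat (map e cs)"
      by auto
    with right show ?thesis
      by (intro bexI[of _ "b # cs"]) (auto intro: Cons_in_shuffles_rightI)
  qed
qed

definition peer_actions :: "('m \<Rightarrow> nat) \<Rightarrow> ('m \<Rightarrow> nat) \<Rightarrow> nat \<Rightarrow> 'm \<Rightarrow> 'm action list" where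
  "peer_actions src dst i a =
     (if src a = i then [Send a] else if dst a = i then [Recv a] else [])"

lemma length_peer_actions_le_1: "length (peer_actions src dst i a) \<le> 1"
  by (simp add: peer_actions_def)

lemma proj_sendrecv:
  assumes "\<forall>a\<in>set w. src a \<noteq> dst a"
  shows "proj src dst i (sendrecv w) = concat (map (peer_actions src dst i) w)"
  using assms by (induction w) (auto simp: proj_def sendrecv_def peer_actions_def)

lemma proj_in_shuffles:
  "\<tau> \<in> shuffles xs ys \<Longrightarrow> proj src dst i \<tau> \<in> shuffles (proj src dst i xs) (proj src dst i ys)"
  unfolding proj_def using filter_shuffles by blast

theorem lemma4p8:
  fixes SigmaM :: "'m set" and N :: nat and src dst :: "'m \<Rightarrow> nat"
    and as bs :: "'m list" and \<tau> :: "'m action list" and i :: nat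
  assumes "message_set SigmaM N src dst"
    and "set as \<subseteq> SigmaM" and "set bs \<subseteq> SigmaM"
    and "\<tau> \<in> shuffles (sendrecv as) (sendrecv bs)"
    and "i \<in> {1..N}"
  shows "\<exists>cs \<in> shuffles as bs. proj src dst i \<tau> = proj src dst i (sendrecv cs)"
proof -
  let ?e = "peer_actions src dst i"
  have distinct_ends: "\<forall>a\<in>SigmaM. src a \<noteq> dst a"
    using assms(1) by (auto simp: message_set_def)
  have "proj src dst i \<tau> \<in> shuffles (concat (map ?e as)) (concat (map ?e bs))"
    using proj_in_shuffles[OF assms(4)] proj_sendrecv distinct_ends assms(2,3)
    by (metis subsetD)
  then obtain cs where cs: "cs \<in> shuffles as bs" "proj src dst i \<tau> = concat (map ?e cs)"
    using in_shuffles_concat_map_lift[where e = ?e, OF length_peer_actions_le_1] by blast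
  have "set cs \<subseteq> SigmaM"
    using set_shuffles[OF cs(1)] assms(2,3) by auto
  with cs distinct_ends show ?thesis
    using proj_sendrecv by (metis subsetD)
qed

end
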